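(* Let $X$ be an infinite-dimensional complex Banach space and let $A,B\in\mathcal{B}(X)$. The following are equivalent: (i) $K(AT+TA)=K(BT+TB)$ for every $T\in\mathcal{B}(X)$. (ii) $K(AF+FA)=K(BF+FB)$ for every $F\in\mathcal{F}_1(X)$. (iii) $B=\lambda A$ for some nonzero scalar $\lambda\in\mathbb{C}$.
   Context: $\mathcal{B}(X)$ denotes the algebra of all bounded linear operators on $X$, and $\mathcal{F}_1(X)$ the set of all operators in $\mathcal{B}(X)$ of rank at most one (i.e. operators $x\otimes f: z\mapsto f(z)x$ with $x\in X$, $f\in X^*$). For $T\in\mathcal{B}(X)$, the analytic core $K(T)$ is the set of all $x\in X$ for which there exist $\delta>0$ and a sequence $(x_n)_{n\ge 0}\subset X$ with $x_0=x$, $Tx_{n+1}=x_n$ and $\|x_n\|\le \delta^n\|x\|$ for all $n\ge 0$. *)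

theory Defs
  imports "HOL-Analysis.Analysis"
begin

class complex_banach = banach +
  fixes scaleC :: "complex \<Rightarrow> 'a \<Rightarrow> 'a" (infixr \<open>*\<^sub>C\<close> 75)
  assumes scaleC_add_right: "scaleC a (x + y) = scaleC a x + scaleC a y"
    and scaleC_add_left: "scaleC (a + b) x = scaleC a x + scaleC b x"
    and scaleC_scaleC: "scaleC a (scaleC b x) = scaleC (a * b) x"
    and scaleC_one: "scaleC 1 x = x"
    and scaleR_scaleC: "scaleR r x = scaleC (complex_of_real r) x"
    and norm_scaleC: "norm (scaleC a x) = cmod a * norm x"

definition infinite_dimensional_C :: "'a::complex_banach itself \<Rightarrow> bool" where
  "infinite_dimensional_C _ \<longleftrightarrow>
     (\<forall>S :: 'a set. finite S \<longrightarrow> module.span scaleC S \<noteq> UNIV)"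

definition bounded_clinear_op :: "('a::complex_banach \<Rightarrow> 'a) \<Rightarrow> bool" where
  "bounded_clinear_op T \<longleftrightarrow> bounded_linear T \<and> (\<forall>c x. T (c *\<^sub>C x) = c *\<^sub>C T x)"

definition bounded_cfunctional :: "('a::complex_banach \<Rightarrow> complex) \<Rightarrow> bool" where
  "bounded_cfunctional f \<longleftrightarrow> bounded_linear f \<and> (\<forall>c x. f (c *\<^sub>C x) = c * f x)"

definition rank_le_one_ops :: "('a::complex_banach \<Rightarrow> 'a) set" where
  "rank_le_one_ops = {(\<lambda>z. f z *\<^sub>C x) | x f. bounded_cfunctional f}"

definition analytic_core :: "('a::complex_banach \<Rightarrow> 'a) \<Rightarrow> 'a set" where
  "analytic_core T = {x. \<exists>\<delta>>0. \<exists>xs :: nat \<Rightarrow> 'a. xs 0 = x \<and>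
      (\<forall>n. T (xs (Suc n)) = xs n) \<and> (\<forall>n. norm (xs n) \<le> \<delta> ^ n * norm x)}"

end

theory Submission
  imports Defs
begin

text \<open>
  (iii) implies (i) because K(c S) = K(S) for c \<noteq> 0, and (i) implies (ii) trivially.
  For (ii) implies (iii), take F = y \<otimes> f. The operator A F + F A maps into span {y, A y} and
  acts there by a 2 x 2 matrix; its analytic core is trivial when that matrix is nilpotent and
  contains an eigenvector otherwise. Choosing f by the Hahn-Banach theorem so that the core for A
  is trivial while the one for B is not, one shows first B y \<in> span {y, A y} and then, according to
  whether y is an eigenvector of A, lies in a two-dimensional A-invariant subspace, or neither,
  that B y is a multiple of A y. Pointwise proportional linear maps are proportional, and the
  symmetry of (ii) in A and B excludes the factor 0 unless A = B = 0.
\<close>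

section \<open>The Hahn-Banach theorem\<close>

text \<open>Graphs of linear functionals on subspaces of X that are dominated by the norm: a subspace of
  X \<times> \<real> whose only point over 0 is (0, 0).\<close>
definition norm_dominated_graph :: "('a::real_normed_vector \<times> real) set \<Rightarrow> bool" where
  "norm_dominated_graph G \<longleftrightarrow>
     subspace G \<and> (\<forall>a. (0, a) \<in> G \<longrightarrow> a = 0) \<and> (\<forall>(x, a)\<in>G. a \<le> norm x)"

lemma norm_dominated_graphD:
  assumes "norm_dominated_graph G"
  shows norm_dominated_graph_subspace: "subspace G"
    and norm_dominated_graph_zero: "(0, a) \<in> G \<Longrightarrow> a = 0"
    and norm_dominated_graph_le: "(x, a) \<in> G \<Longrightarrow> a \<le> norm x"
  using assms unfolding norm_dominated_graph_def by auto

lemma norm_dominated_graph_unique: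
  assumes G: "norm_dominated_graph G" and "(x, a) \<in> G" "(x, b) \<in> G"
  shows "a = b"
proof -
  have "(x, a) - (x, b) \<in> G"
    using assms subspace_diff norm_dominated_graph_subspace by blast
  then have "(0, a - b) \<in> G" by simp
  then show ?thesis using norm_dominated_graph_zero[OF G] by fastforce
qed

lemma norm_dominated_graph_extension_constant:
  assumes G: "norm_dominated_graph G"
  obtains c where "\<And>y b. (y, b) \<in> G \<Longrightarrow> b - norm (y - x0) \<le> c"
    and "\<And>y b. (y, b) \<in> G \<Longrightarrow> c \<le> norm (y + x0) - b"
proof -
  have sep: "b - norm (y - x0) \<le> norm (w + x0) - e" if "(y, b) \<in> G" "(w, e) \<in> G" for y b w e
  proof -
    have "(y + w, b + e) \<in> G"
      using that subspace_add[OF norm_dominated_graph_subspace[OF G]] by fastforce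
    then have "b + e \<le> norm ((y - x0) + (w + x0))" by (simp add: norm_dominated_graph_le[OF G])
    also have "\<dots> \<le> norm (y - x0) + norm (w + x0)" by (rule norm_triangle_ineq)
    finally show ?thesis by simp
  qed
  define L where "L = {b - norm (y - x0) | y b. (y, b) \<in> G}"
  have zero: "(0, 0) \<in> G"
    using subspace_0[OF norm_dominated_graph_subspace[OF G]] by (simp add: zero_prod_def)
  then have "L \<noteq> {}" unfolding L_def by blast
  have "bdd_above L" using sep[OF _ zero] unfolding L_def bdd_above_def by auto
  show ?thesis
  proof (rule that[of "Sup L"])
    show "b - norm (y - x0) \<le> Sup L" if "(y, b) \<in> G" for y b
      using that \<open>bdd_above L\<close> by (intro cSup_upper) (auto simp: L_def)
    show "Sup L \<le> norm (y + x0) - b" if "(y, b) \<in> G" for y b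
      using that \<open>L \<noteq> {}\<close> sep by (intro cSup_least) (auto simp: L_def)
  qed
qed

lemma norm_dominated_graph_extension_dominated:
  assumes G: "norm_dominated_graph G" and yb: "(y, b) \<in> G"
    and lower: "\<And>y b. (y, b) \<in> G \<Longrightarrow> b - norm (y - x0) \<le> c"
    and upper: "\<And>y b. (y, b) \<in> G \<Longrightarrow> c \<le> norm (y + x0) - b"
  shows "b + t * c \<le> norm (y + t *\<^sub>R x0)"
proof -
  have scaled: "((1 / s) *\<^sub>R y, (1 / s) * b) \<in> G" for s
    using subspace_scale[OF norm_dominated_graph_subspace[OF G] yb, of "1 / s"] by simp
  consider "t = 0" | "t > 0" | "t < 0" by linarith
  then show ?thesis
  proof cases
    case 1
    then show ?thesis using norm_dominated_graph_le[OF G yb] by simp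
  next
    case 2
    have "t * c \<le> t * (norm ((1 / t) *\<^sub>R y + x0) - (1 / t) * b)"
      using upper[OF scaled[of t]] 2 by (intro mult_left_mono) auto
    also have "\<dots> = norm (t *\<^sub>R ((1 / t) *\<^sub>R y + x0)) - b"
      using 2 by (simp add: right_diff_distrib)
    finally show ?thesis using 2 by (simp add: scaleR_add_right)
  next
    case 3
    define s where "s = - t"
    have s: "s > 0" using 3 by (simp add: s_def)
    have "b - s * norm ((1 / s) *\<^sub>R y - x0) \<le> s * c"
      using lower[OF scaled[of s]] s by (simp add: field_simps)
    also have "s * norm ((1 / s) *\<^sub>R y - x0) = norm (s *\<^sub>R ((1 / s) *\<^sub>R y - x0))"
      using s by simp
    also have "s *\<^sub>R ((1 / s) *\<^sub>R y - x0) = y + t *\<^sub>R x0"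
      using s by (simp add: scaleR_diff_right s_def)
    finally show ?thesis by (simp add: s_def)
  qed
qed

lemma subspace_graph_extension:
  fixes G :: "('a::real_vector \<times> real) set"
  assumes G: "subspace G"
  shows "subspace {(y + t *\<^sub>R x0, b + t * c) | y b t. (y, b) \<in> G}" (is "subspace ?G'")
  unfolding subspace_def
proof (intro conjI ballI allI)
  show "0 \<in> ?G'"
    using subspace_0[OF G] by (force simp: zero_prod_def)
next
  fix p q assume "p \<in> ?G'" "q \<in> ?G'"
  then obtain y b t w e s where "p = (y + t *\<^sub>R x0, b + t * c)" "(y, b) \<in> G"
    "q = (w + s *\<^sub>R x0, e + s * c)" "(w, e) \<in> G" by blast
  moreover have "(y + w, b + e) \<in> G" using calculation subspace_add[OF G] by force
  ultimately show "p + q \<in> ?G'"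
    by (intro CollectI exI[of _ "y + w"] exI[of _ "b + e"] exI[of _ "t + s"]) (simp add: algebra_simps)
next
  fix r p assume "p \<in> ?G'"
  then obtain y b t where "p = (y + t *\<^sub>R x0, b + t * c)" "(y, b) \<in> G" by blast
  moreover have "(r *\<^sub>R y, r * b) \<in> G" using calculation subspace_scale[OF G] by force
  ultimately show "r *\<^sub>R p \<in> ?G'"
    by (intro CollectI exI[of _ "r *\<^sub>R y"] exI[of _ "r * b"] exI[of _ "r * t"]) (simp add: algebra_simps)
qed

lemma norm_dominated_graph_extend:
  assumes G: "norm_dominated_graph G" and x0: "x0 \<notin> fst ` G"
  obtains G' where "norm_dominated_graph G'" "G \<subseteq> G'" "x0 \<in> fst ` G'"
proof -
  obtain c where lower: "\<And>y b. (y, b) \<in> G \<Longrightarrow> b - norm (y - x0) \<le> c"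
    and upper: "\<And>y b. (y, b) \<in> G \<Longrightarrow> c \<le> norm (y + x0) - b"
    using norm_dominated_graph_extension_constant[OF G] by blast
  define G' where "G' = {(y + t *\<^sub>R x0, b + t * c) | y b t. (y, b) \<in> G}"
  have "subspace G'"
    unfolding G'_def by (rule subspace_graph_extension[OF norm_dominated_graph_subspace[OF G]])
  moreover have "a = 0" if a0: "(0, a) \<in> G'" for a
  proof -
    obtain y b t where yb: "(y, b) \<in> G" "0 = y + t *\<^sub>R x0" "a = b + t * c"
      using a0 unfolding G'_def by blast
    have "t = 0"
    proof (rule ccontr)
      assume "t \<noteq> 0"
      have "(- 1 / t) *\<^sub>R (y, b) \<in> G"
        using subspace_scale[OF norm_dominated_graph_subspace[OF G] yb(1)] by blast
      moreover have "y = - (t *\<^sub>R x0)" using yb(2) by (simp add: eq_neg_iff_add_eq_0)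
      then have "(- 1 / t) *\<^sub>R y = x0" using \<open>t \<noteq> 0\<close> by simp
      ultimately show False using x0 by force
    qed
    then show ?thesis using yb norm_dominated_graph_zero[OF G] by simp
  qed
  moreover have "a \<le> norm x" if "(x, a) \<in> G'" for x a
    using that norm_dominated_graph_extension_dominated[OF G _ lower upper] unfolding G'_def by blast
  moreover have "G \<subseteq> G'" unfolding G'_def by force
  moreover have "(x0, c) \<in> G'"
    using subspace_0[OF norm_dominated_graph_subspace[OF G]]
    unfolding G'_def zero_prod_def by force
  then have "x0 \<in> fst ` G'" by (metis fst_conv image_eqI)
  ultimately show ?thesis
    by (intro that[of G']) (auto simp: norm_dominated_graph_def)
qed

lemma norm_dominated_graph_Union_chain:
  assumes C: "C \<in> chains {G. norm_dominated_graph G}" and "C \<noteq> {}"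
  shows "norm_dominated_graph (\<Union>C)"
proof -
  have dom: "norm_dominated_graph G" if "G \<in> C" for G using C that chainsD2 by blast
  have "subspace (\<Union>C)" unfolding subspace_def
  proof (intro conjI ballI allI)
    show "0 \<in> \<Union>C"
      using \<open>C \<noteq> {}\<close> dom subspace_0 norm_dominated_graph_subspace by blast
  next
    fix p q assume "p \<in> \<Union>C" "q \<in> \<Union>C"
    then obtain G H where GH: "G \<in> C" "H \<in> C" "p \<in> G" "q \<in> H" by blast
    then obtain K where "K \<in> C" "p \<in> K" "q \<in> K" using chainsD[OF C GH(1,2)] by blast
    then show "p + q \<in> \<Union>C" using dom subspace_add norm_dominated_graph_subspace by blast
  next
    fix r p assume "p \<in> \<Union>C"
    then show "r *\<^sub>R p \<in> \<Union>C" using dom subspace_scale norm_dominated_graph_subspace by blast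
  qed
  then show ?thesis
    using dom norm_dominated_graph_zero norm_dominated_graph_le
    unfolding norm_dominated_graph_def by blast
qed

lemma exists_maximal_norm_dominated_graph:
  assumes "norm_dominated_graph G0"
  obtains M where "norm_dominated_graph M" "G0 \<subseteq> M"
    and "\<And>X. norm_dominated_graph X \<Longrightarrow> M \<subseteq> X \<Longrightarrow> X = M"
proof -
  let ?D = "{G. norm_dominated_graph G \<and> G0 \<subseteq> G}"
  have "\<exists>M\<in>?D. \<forall>X\<in>?D. M \<subseteq> X \<longrightarrow> X = M"
  proof (rule Zorn_Lemma2, intro ballI)
    fix C assume C: "C \<in> chains ?D"
    show "\<exists>U\<in>?D. \<forall>X\<in>C. X \<subseteq> U"
    proof (cases "C = {}")
      case True
      then show ?thesis using assms by blast
    next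
      case False
      have "C \<in> chains {G. norm_dominated_graph G}" using C by (auto simp: chains_def)
      then have "norm_dominated_graph (\<Union>C)" using False by (rule norm_dominated_graph_Union_chain)
      moreover have "G0 \<subseteq> \<Union>C" using C False chainsD2 by blast
      ultimately show ?thesis by blast
    qed
  qed
  then obtain M where M: "norm_dominated_graph M" "G0 \<subseteq> M"
    and max: "\<forall>X\<in>?D. M \<subseteq> X \<longrightarrow> X = M" by blast
  show ?thesis
  proof (rule that[OF M])
    show "X = M" if "norm_dominated_graph X" "M \<subseteq> X" for X
      using that M(2) max by blast
  qed
qed

lemma maximal_norm_dominated_graph_total:
  assumes M: "norm_dominated_graph M"
    and max: "\<And>X. norm_dominated_graph X \<Longrightarrow> M \<subseteq> X \<Longrightarrow> X = M"
  shows "x \<in> fst ` M"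
proof (rule ccontr)
  assume "x \<notin> fst ` M"
  then obtain G where "norm_dominated_graph G" "M \<subseteq> G" "x \<in> fst ` G"
    by (rule norm_dominated_graph_extend[OF M])
  then show False using max \<open>x \<notin> fst ` M\<close> by blast
qed

lemma total_norm_dominated_graph_functional:
  assumes M: "norm_dominated_graph M" and total: "\<And>x. x \<in> fst ` M"
  obtains F where "linear F" "\<And>x a. (x, a) \<in> M \<longleftrightarrow> a = F x"
proof -
  define F where "F x = (THE a. (x, a) \<in> M)" for x
  have "(x, F x) \<in> M" for x
  proof -
    obtain a where a: "(x, a) \<in> M" using total[of x] by force
    then show ?thesis unfolding F_def
      by (rule theI[where P = "\<lambda>a. (x, a) \<in> M"]) (use norm_dominated_graph_unique[OF M _ a] in blast)
  qed
  then have FM: "(x, a) \<in> M \<longleftrightarrow> a = F x" for x a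
    using norm_dominated_graph_unique[OF M] by blast
  have "linear F"
  proof (rule linearI)
    fix x y :: 'a and r :: real
    have "(x + y, F x + F y) \<in> M" "(r *\<^sub>R x, r * F x) \<in> M"
      using subspace_add[OF norm_dominated_graph_subspace[OF M], of "(x, F x)" "(y, F y)"]
        subspace_scale[OF norm_dominated_graph_subspace[OF M], of "(x, F x)" r] FM
      by auto
    then show "F (x + y) = F x + F y" "F (r *\<^sub>R x) = r *\<^sub>R F x" using FM by auto
  qed
  then show ?thesis using FM by (rule that)
qed

lemma exists_norm_attaining_functional:
  fixes z :: "'a::real_normed_vector"
  obtains F where "linear F" "F z = norm z" "\<And>x. F x \<le> norm x"
proof -
  have "a = 0" if "(0, a) \<in> span {(z, norm z)}" for a
    using that by (auto simp: span_singleton)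
  moreover have "a \<le> norm x" if "(x, a) \<in> span {(z, norm z)}" for x a
    using that by (auto simp: span_singleton abs_mult intro!: mult_right_mono)
  ultimately have "norm_dominated_graph (span {(z, norm z)})"
    by (auto simp: norm_dominated_graph_def)
  then obtain M where M: "norm_dominated_graph M" "span {(z, norm z)} \<subseteq> M"
    and max: "\<And>X. norm_dominated_graph X \<Longrightarrow> M \<subseteq> X \<Longrightarrow> X = M"
    using exists_maximal_norm_dominated_graph by blast
  obtain F where "linear F" and FM: "\<And>x a. (x, a) \<in> M \<longleftrightarrow> a = F x"
    using total_norm_dominated_graph_functional[OF M(1) maximal_norm_dominated_graph_total[OF M(1) max]]
    by blast
  have "(z, norm z) \<in> M" using M(2) span_base[of "(z, norm z)"] by blast
  then have "F z = norm z" using FM[of z "norm z"] by simp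
  moreover have "F x \<le> norm x" for x using norm_dominated_graph_le[OF M(1), of x "F x"] FM[of x "F x"] by simp
  ultimately show ?thesis using \<open>linear F\<close> that by blast
qed

section \<open>Complex linear maps and functionals\<close>

interpretation C: vector_space "scaleC :: complex \<Rightarrow> 'a::complex_banach \<Rightarrow> 'a"
  by unfold_locales (simp_all add: scaleC_add_right scaleC_add_left scaleC_scaleC scaleC_one)

abbreviation clinear :: "('a::complex_banach \<Rightarrow> 'a) \<Rightarrow> bool" where
  "clinear \<equiv> module_hom scaleC scaleC"

lemma vector_space_pair_scaleC:
  "vector_space_pair (scaleC :: complex \<Rightarrow> 'a::complex_banach \<Rightarrow> 'a) (scaleC :: complex \<Rightarrow> 'b::complex_banach \<Rightarrow> 'b)"
  by (simp add: vector_space_pair_def C.vector_space_axioms)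

lemma clinear_if_bounded_clinear_op: "bounded_clinear_op T \<Longrightarrow> clinear T"
  unfolding bounded_clinear_op_def module_hom_iff
  by (auto simp: linear_simps C.module_axioms)

lemma clinear_jordan_product:
  assumes "clinear A" "clinear T"
  shows "clinear (\<lambda>x. A (T x) + T (A x))"
  using assms unfolding module_hom_iff by (simp add: scaleC_add_right)

lemma scaleC_eq_Re_Im: "c *\<^sub>C (x::'a::complex_banach) = Re c *\<^sub>R x + Im c *\<^sub>R (\<i> *\<^sub>C x)"
proof -
  have "Re c *\<^sub>R x + Im c *\<^sub>R (\<i> *\<^sub>C x) = (complex_of_real (Re c) + complex_of_real (Im c) * \<i>) *\<^sub>C x"
    by (simp add: scaleR_scaleC scaleC_add_left)
  also have "complex_of_real (Re c) + complex_of_real (Im c) * \<i> = c" by (simp add: complex_eq_iff)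
  finally show ?thesis by simp
qed

lemma scaleC_double: "(2 * a) *\<^sub>C (x::'a::complex_banach) = a *\<^sub>C x + a *\<^sub>C x"
  by (metis mult_2 scaleC_add_left)

lemma mem_C_span_pair: "x \<in> C.span {u, v} \<longleftrightarrow> (\<exists>a b. x = a *\<^sub>C u + b *\<^sub>C v)"
proof
  assume "x \<in> C.span {u, v}"
  then obtain a b where "x - a *\<^sub>C u = b *\<^sub>C v"
    unfolding C.span_breakdown_eq C.span_singleton by blast
  then show "\<exists>a b. x = a *\<^sub>C u + b *\<^sub>C v" by (metis add.commute diff_eq_eq)
next
  assume "\<exists>a b. x = a *\<^sub>C u + b *\<^sub>C v"
  then obtain a b where "x = a *\<^sub>C u + b *\<^sub>C v" by blast
  then have "x - a *\<^sub>C u = b *\<^sub>C v" by simp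
  then show "x \<in> C.span {u, v}" unfolding C.span_breakdown_eq C.span_singleton by blast
qed

lemma bounded_cfunctional_simps:
  assumes "bounded_cfunctional f"
  shows "f (x + y) = f x + f y" "f (x - y) = f x - f y" "f 0 = 0" "f (c *\<^sub>C x) = c * f x"
  using assms unfolding bounded_cfunctional_def by (auto simp: linear_simps)

lemma bounded_cfunctional_diff:
  assumes "bounded_cfunctional f" "bounded_cfunctional g"
  shows "bounded_cfunctional (\<lambda>x. f x - g x)"
  using assms unfolding bounded_cfunctional_def
  by (auto intro: bounded_linear_sub simp: right_diff_distrib)

lemma bounded_cfunctional_mult:
  assumes "bounded_cfunctional f"
  shows "bounded_cfunctional (\<lambda>x. c * f x)"
  using assms unfolding bounded_cfunctional_def
  by (auto intro: bounded_linear_compose[OF bounded_linear_mult_right] simp: mult.left_commute)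

lemma bounded_cfunctional_complexification:
  fixes F :: "'a::complex_banach \<Rightarrow> real"
  assumes F: "linear F" and le: "\<And>x. F x \<le> norm x"
  shows "bounded_cfunctional (\<lambda>x. complex_of_real (F x) - \<i> * complex_of_real (F (\<i> *\<^sub>C x)))"
    (is "bounded_cfunctional ?g")
proof -
  interpret F: linear F by (rule F)
  have abs_le: "\<bar>F x\<bar> \<le> norm x" for x
    using le[of x] le[of "- x"] F.neg[of x] by simp
  have add: "?g (x + y) = ?g x + ?g y" for x y
    by (simp add: scaleC_add_right F.add algebra_simps)
  have scaleR: "?g (r *\<^sub>R x) = r *\<^sub>R ?g x" for r x
  proof -
    have "\<i> *\<^sub>C (r *\<^sub>R x) = r *\<^sub>R (\<i> *\<^sub>C x)"
      by (simp add: scaleR_scaleC scaleC_scaleC mult.commute)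
    then show ?thesis by (simp add: F.scale scaleR_conv_of_real algebra_simps)
  qed
  have ii: "?g (\<i> *\<^sub>C x) = \<i> * ?g x" for x
    by (simp add: scaleC_scaleC F.neg algebra_simps)
  have "?g (c *\<^sub>C x) = c * ?g x" for c x
  proof -
    have "?g (c *\<^sub>C x) = (complex_of_real (Re c) + complex_of_real (Im c) * \<i>) * ?g x"
      by (simp only: scaleC_eq_Re_Im[of c x] add scaleR ii) (simp add: scaleR_conv_of_real algebra_simps)
    also have "complex_of_real (Re c) + complex_of_real (Im c) * \<i> = c" by (simp add: complex_eq_iff)
    finally show ?thesis .
  qed
  moreover have "bounded_linear ?g"
  proof (rule bounded_linear_intro[OF add scaleR])
    fix x
    have "norm (?g x) \<le> norm (complex_of_real (F x)) + norm (\<i> * complex_of_real (F (\<i> *\<^sub>C x)))"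
      by (rule norm_triangle_ineq4)
    also have "\<dots> = \<bar>F x\<bar> + \<bar>F (\<i> *\<^sub>C x)\<bar>" by (simp add: norm_mult)
    also have "\<dots> \<le> norm x + norm (\<i> *\<^sub>C x)" by (intro add_mono abs_le)
    finally show "norm (?g x) \<le> norm x * 2" by (simp add: norm_scaleC)
  qed
  ultimately show ?thesis unfolding bounded_cfunctional_def by blast
qed

lemma exists_bounded_cfunctional_eq_1:
  fixes z :: "'a::complex_banach"
  assumes "z \<noteq> 0"
  obtains f where "bounded_cfunctional f" "f z = 1"
proof -
  obtain F where F: "linear F" "F z = norm z" "\<And>x. F x \<le> norm x"
    using exists_norm_attaining_functional[of z] by blast
  define g where "g x = complex_of_real (F x) - \<i> * complex_of_real (F (\<i> *\<^sub>C x))" for x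
  have g: "bounded_cfunctional g"
    unfolding g_def using F(1,3) by (rule bounded_cfunctional_complexification)
  have "Re (g z) = norm z" by (simp add: g_def F(2))
  then have "g z \<noteq> 0" using assms by auto
  show ?thesis
  proof (rule that)
    show "bounded_cfunctional (\<lambda>x. inverse (g z) * g x)" using g by (rule bounded_cfunctional_mult)
    show "inverse (g z) * g z = 1" using \<open>g z \<noteq> 0\<close> by simp
  qed
qed

lemma exists_bounded_cfunctional_separating:
  fixes z :: "'a::complex_banach"
  assumes "finite S" "z \<notin> C.span S"
  shows "\<exists>f. bounded_cfunctional f \<and> f z = 1 \<and> (\<forall>u\<in>S. f u = 0)"
  using assms
proof (induction S arbitrary: z rule: finite_induct)
  case empty
  then show ?case using exists_bounded_cfunctional_eq_1[of z] by auto
next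
  case (insert u S)
  have "z \<notin> C.span S" using insert.prems C.span_mono[of S "insert u S"] by blast
  then obtain g where g: "bounded_cfunctional g" "g z = 1" "\<forall>x\<in>S. g x = 0"
    using insert.IH by blast
  show ?case
  proof (cases "g u = 0")
    case True
    then show ?thesis using g by blast
  next
    case False
    define w where "w = u - g u *\<^sub>C z"
    have "w \<notin> C.span S"
    proof
      assume "w \<in> C.span S"
      then have "u - w \<in> C.span (insert u S)"
        using C.span_mono[of S "insert u S"] C.span_base[of u "insert u S"] C.span_diff by blast
      then have "g u *\<^sub>C z \<in> C.span (insert u S)" unfolding w_def by simp
      then have "(1 / g u) *\<^sub>C (g u *\<^sub>C z) \<in> C.span (insert u S)" by (rule C.span_scale)
      then show False using False insert.prems by simp
    qed
    then obtain h where h: "bounded_cfunctional h" "h w = 1" "\<forall>x\<in>S. h x = 0"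
      using insert.IH by blast
    have hu: "h u = 1 + g u * h z"
      using h(2) unfolding w_def bounded_cfunctional_simps[OF h(1)] by (simp add: algebra_simps)
    have "bounded_cfunctional (\<lambda>x. g x - g u * (h x - h z * g x))"
      using g(1) h(1) by (intro bounded_cfunctional_diff bounded_cfunctional_mult)
    then show ?thesis using g h hu by (intro exI[of _ "\<lambda>x. g x - g u * (h x - h z * g x)"]) (auto simp: algebra_simps)
  qed
qed

lemma scaleC_pair_cancel:
  assumes f: "bounded_cfunctional f" and "f y = 1" "f v = 0" "v \<noteq> 0"
    and eq: "a *\<^sub>C y + b *\<^sub>C v = a' *\<^sub>C y + b' *\<^sub>C v"
  shows "a = a'" and "b = b'"
proof -
  show "a = a'" using arg_cong[OF eq, of f] assms(2,3) by (simp add: bounded_cfunctional_simps[OF f])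
  then have "(b - b') *\<^sub>C v = 0" using eq by (simp add: C.scale_left_diff_distrib)
  then show "b = b'" using \<open>v \<noteq> 0\<close> by simp
qed

lemma bounded_clinear_op_if_rank_le_one:
  assumes "F \<in> rank_le_one_ops"
  shows "bounded_clinear_op F"
proof -
  obtain x f where F: "F = (\<lambda>z. f z *\<^sub>C x)" and f: "bounded_cfunctional f"
    using assms unfolding rank_le_one_ops_def by blast
  interpret f: bounded_linear f using f unfolding bounded_cfunctional_def by simp
  obtain K where K: "\<And>z. norm (f z) \<le> norm z * K" using f.bounded by blast
  have "bounded_linear (\<lambda>z. f z *\<^sub>C x)"
  proof (rule bounded_linear_intro)
    show "f (a + b) *\<^sub>C x = f a *\<^sub>C x + f b *\<^sub>C x" for a b by (simp add: f.add scaleC_add_left)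
    show "f (r *\<^sub>R a) *\<^sub>C x = r *\<^sub>R (f a *\<^sub>C x)" for r a
      by (simp only: f.scale) (simp add: scaleR_scaleC scaleR_conv_of_real)
    show "norm (f a *\<^sub>C x) \<le> norm a * (K * norm x)" for a
      using K[of a] by (simp add: norm_scaleC mult.assoc[symmetric] mult_right_mono)
  qed
  then show ?thesis
    using f by (simp add: F bounded_clinear_op_def bounded_cfunctional_simps)
qed

section \<open>Analytic cores\<close>

lemma analytic_core_subset_range_funpow:
  assumes "x \<in> analytic_core S"
  shows "x \<in> range (S ^^ n)"
proof -
  obtain xs where xs: "xs 0 = x" "\<And>n. S (xs (Suc n)) = xs n"
    using assms unfolding analytic_core_def by blast
  have "(S ^^ n) (xs n) = x" for n
    by (induction n) (simp_all add: xs funpow_Suc_right del: funpow.simps)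
  then show ?thesis by (metis rangeI)
qed

lemma analytic_core_nilpotent:
  assumes "\<And>z. (S ^^ n) z = 0"
  shows "analytic_core S \<subseteq> {0}"
  using analytic_core_subset_range_funpow[of _ S n] assms by auto

lemma eigenvector_mem_analytic_core:
  assumes S: "clinear S" and Sy: "S y = \<mu> *\<^sub>C y" and "\<mu> \<noteq> 0"
  shows "y \<in> analytic_core S"
proof -
  define xs where "xs n = (1 / \<mu>) ^ n *\<^sub>C y" for n
  have "xs 0 = y" by (simp add: xs_def)
  moreover have "S (xs (Suc n)) = xs n" for n
    using \<open>\<mu> \<noteq> 0\<close> by (simp add: xs_def module_hom.scale[OF S] Sy)
  moreover have "norm (xs n) \<le> (1 / cmod \<mu>) ^ n * norm y" for n
    by (simp add: xs_def norm_scaleC norm_power norm_divide)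
  moreover have "1 / cmod \<mu> > 0" using \<open>\<mu> \<noteq> 0\<close> by simp
  ultimately show ?thesis unfolding analytic_core_def by blast
qed

lemma analytic_core_scaleC_subset:
  assumes S: "clinear S" and "c \<noteq> 0"
  shows "analytic_core S \<subseteq> analytic_core (\<lambda>x. c *\<^sub>C S x)"
proof
  fix x assume "x \<in> analytic_core S"
  then obtain \<delta> xs where "\<delta> > 0" and xs: "xs 0 = x" "\<And>n. S (xs (Suc n)) = xs n"
    "\<And>n. norm (xs n) \<le> \<delta> ^ n * norm x"
    unfolding analytic_core_def by blast
  define ys where "ys n = (1 / c) ^ n *\<^sub>C xs n" for n
  have "ys 0 = x" by (simp add: ys_def xs(1))
  moreover have "c *\<^sub>C S (ys (Suc n)) = ys n" for n
    using \<open>c \<noteq> 0\<close> by (simp add: ys_def module_hom.scale[OF S] xs(2))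
  moreover have "norm (ys n) \<le> (\<delta> / cmod c) ^ n * norm x" for n
  proof -
    have "norm (ys n) = (1 / cmod c) ^ n * norm (xs n)"
      by (simp add: ys_def norm_scaleC norm_power norm_divide)
    also have "\<dots> \<le> (1 / cmod c) ^ n * (\<delta> ^ n * norm x)" using xs(3) by (intro mult_left_mono) auto
    finally show ?thesis by (simp add: power_divide)
  qed
  moreover have "\<delta> / cmod c > 0" using \<open>\<delta> > 0\<close> \<open>c \<noteq> 0\<close> by simp
  ultimately show "x \<in> analytic_core (\<lambda>x. c *\<^sub>C S x)" unfolding analytic_core_def by blast
qed

lemma analytic_core_scaleC:
  assumes S: "clinear S" and "c \<noteq> 0"
  shows "analytic_core (\<lambda>x. c *\<^sub>C S x) = analytic_core S"
proof
  show "analytic_core S \<subseteq> analytic_core (\<lambda>x. c *\<^sub>C S x)"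
    using assms by (rule analytic_core_scaleC_subset)
  have "clinear (\<lambda>x. c *\<^sub>C S x)"
    using S unfolding module_hom_iff by (simp add: scaleC_add_right C.scale_left_commute)
  then have "analytic_core (\<lambda>x. c *\<^sub>C S x) \<subseteq> analytic_core (\<lambda>x. (1 / c) *\<^sub>C (c *\<^sub>C S x))"
    using \<open>c \<noteq> 0\<close> analytic_core_scaleC_subset[of "\<lambda>x. c *\<^sub>C S x" "1 / c"] by simp
  also have "(\<lambda>x. (1 / c) *\<^sub>C (c *\<^sub>C S x)) = S" using \<open>c \<noteq> 0\<close> by simp
  finally show "analytic_core (\<lambda>x. c *\<^sub>C S x) \<subseteq> analytic_core S" .
qed

section \<open>Jordan products with rank-one operators\<close>

definition rank_one_jordan :: "('a::complex_banach \<Rightarrow> 'a) \<Rightarrow> ('a \<Rightarrow> complex) \<Rightarrow> 'a \<Rightarrow> 'a \<Rightarrow> 'a" where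
  "rank_one_jordan T f y z = f z *\<^sub>C T y + f (T z) *\<^sub>C y"

lemma rank_one_jordan_eq:
  assumes "clinear T"
  shows "(\<lambda>z. T (f z *\<^sub>C y) + f (T z) *\<^sub>C y) = rank_one_jordan T f y"
  using module_hom.scale[OF assms] by (simp add: rank_one_jordan_def fun_eq_iff)

lemma clinear_rank_one_jordan:
  assumes T: "clinear T" and f: "bounded_cfunctional f"
  shows "clinear (rank_one_jordan T f y)"
  unfolding module_hom_iff rank_one_jordan_def
  by (simp add: C.module_axioms module_hom.add[OF T] module_hom.scale[OF T] bounded_cfunctional_simps[OF f]
      scaleC_add_left scaleC_add_right)

text \<open>On its range span {y, T y} the operator acts by a 2 x 2 matrix with trace 2 f (T y) and
  determinant f (T y)^2 - f y f (T (T y)); when both vanish it is nilpotent.\<close>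

lemma analytic_core_rank_one_jordan_trivial:
  assumes T: "clinear T" and f: "bounded_cfunctional f"
    and "f (T y) = 0" and "f y * f (T (T y)) = 0"
  shows "analytic_core (rank_one_jordan T f y) \<subseteq> {0}"
proof (rule analytic_core_nilpotent[where n = 3])
  fix z
  define S where "S = rank_one_jordan T f y"
  interpret S: module_hom scaleC scaleC S
    unfolding S_def using T f by (rule clinear_rank_one_jordan)
  have Sy: "S y = f y *\<^sub>C T y" and STy: "S (T y) = f (T (T y)) *\<^sub>C y"
    using assms(3) by (simp_all add: S_def rank_one_jordan_def)
  have "S z = f z *\<^sub>C T y + f (T z) *\<^sub>C y" by (simp add: S_def rank_one_jordan_def)
  then have "S (S z) = (f z * f (T (T y))) *\<^sub>C y + (f (T z) * f y) *\<^sub>C T y"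
    by (simp add: S.add S.scale Sy STy)
  then have "S (S (S z)) = (f y * f (T (T y))) *\<^sub>C (f z *\<^sub>C T y + f (T z) *\<^sub>C y)"
    by (simp add: S.add S.scale Sy STy scaleC_add_right algebra_simps)
  then show "(rank_one_jordan T f y ^^ 3) z = 0"
    using assms(4) by (simp add: S_def numeral_3_eq_3)
qed

lemma rank_one_jordan_plane:
  assumes T: "clinear T" and f: "bounded_cfunctional f"
    and "f y = 1" "f v = 0" "f (T v) = 0" and Ty: "T y = a *\<^sub>C y + c *\<^sub>C v"
  defines "u \<equiv> (2 * a) *\<^sub>C y + c *\<^sub>C v"
  shows "rank_one_jordan T f y u = (2 * a) *\<^sub>C u"
    and "rank_one_jordan T f y (rank_one_jordan T f y z) = (f z * a + f (T z)) *\<^sub>C u"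
proof -
  interpret S: module_hom scaleC scaleC "rank_one_jordan T f y"
    using T f by (rule clinear_rank_one_jordan)
  have "f (T y) = a" using assms(3,4) Ty by (simp add: bounded_cfunctional_simps[OF f])
  then have "rank_one_jordan T f y y = a *\<^sub>C y + c *\<^sub>C v + a *\<^sub>C y"
    using assms(3) by (simp add: rank_one_jordan_def Ty)
  also have "\<dots> = (2 * a) *\<^sub>C y + c *\<^sub>C v" by (simp only: scaleC_double add_ac)
  finally have Sy: "rank_one_jordan T f y y = u" unfolding u_def .
  have Sv: "rank_one_jordan T f y v = 0" using assms(4,5) by (simp add: rank_one_jordan_def)
  show "rank_one_jordan T f y u = (2 * a) *\<^sub>C u" by (simp add: u_def S.add S.scale Sy Sv)
  have "rank_one_jordan T f y z = (f z * a + f (T z)) *\<^sub>C y + (f z * c) *\<^sub>C v"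
    by (simp add: rank_one_jordan_def Ty scaleC_add_left algebra_simps)
  then show "rank_one_jordan T f y (rank_one_jordan T f y z) = (f z * a + f (T z)) *\<^sub>C u"
    by (simp add: S.add S.scale Sy Sv)
qed

lemma analytic_core_rank_one_jordan_plane:
  assumes T: "clinear T" and f: "bounded_cfunctional f"
    and "f y = 1" "f v = 0" "f (T v) = 0" and Ty: "T y = a *\<^sub>C y + c *\<^sub>C v"
  shows "analytic_core (rank_one_jordan T f y) \<subseteq> range (\<lambda>p. p *\<^sub>C ((2 * a) *\<^sub>C y + c *\<^sub>C v))"
proof
  fix x assume "x \<in> analytic_core (rank_one_jordan T f y)"
  then obtain z where "x = (rank_one_jordan T f y ^^ 2) z"
    using analytic_core_subset_range_funpow by blast
  then have "x = (f z * a + f (T z)) *\<^sub>C ((2 * a) *\<^sub>C y + c *\<^sub>C v)"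
    using rank_one_jordan_plane(2)[OF assms] by (simp add: numeral_2_eq_2)
  then show "x \<in> range (\<lambda>p. p *\<^sub>C ((2 * a) *\<^sub>C y + c *\<^sub>C v))" by blast
qed

section \<open>Local proportionality\<close>

lemma (in vector_space_pair) proportional_if_locally_proportional:
  assumes A: "module_hom s1 s2 A" and B: "module_hom s1 s2 B"
    and loc: "\<And>x. \<exists>l. B x = l *b A x"
  shows "\<exists>l. \<forall>x. B x = l *b A x"
proof (cases "\<forall>x. A x = 0")
  case True
  then show ?thesis using loc by (metis vs2.scale_zero_right)
next
  case False
  then obtain x0 where x0: "A x0 \<noteq> 0" by blast
  obtain l0 where l0: "B x0 = l0 *b A x0" using loc by blast
  have "B x = l0 *b A x" for x
  proof (cases "\<exists>k. A x = k *b A x0")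
    case True
    then obtain k where k: "A x = k *b A x0" by blast
    obtain l where "B (x - k *a x0) = l *b A (x - k *a x0)" using loc by blast
    then have "B (x - k *a x0) = 0" using k by (simp add: module_hom.diff[OF A] module_hom.scale[OF A])
    then have "B x = k *b B x0" by (simp add: module_hom.diff[OF B] module_hom.scale[OF B])
    then show ?thesis using l0 k by (simp add: mult.commute)
  next
    case False
    obtain l1 l2 where l1: "B x = l1 *b A x" and l2: "B (x + x0) = l2 *b A (x + x0)" using loc by blast
    then have eq: "(l1 - l2) *b A x = (l2 - l0) *b A x0"
      using l0 by (simp add: module_hom.add[OF A] module_hom.add[OF B] vs2.scale_right_distrib
          vs2.scale_left_diff_distrib algebra_simps)
    have "l1 = l2"
    proof (rule ccontr)
      assume "l1 \<noteq> l2"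
      then have "A x = ((l2 - l0) / (l1 - l2)) *b A x0"
        using arg_cong[OF eq, of "\<lambda>z. (1 / (l1 - l2)) *b z"] by simp
      then show False using False by blast
    qed
    then have "l2 = l0" using eq x0 by simp
    then show ?thesis using l1 \<open>l1 = l2\<close> by simp
  qed
  then show ?thesis by blast
qed

lemma complex_quadratic_root: "\<exists>k::complex. k * k = c2 * k + c1"
proof -
  define s where "s = csqrt (c2\<^sup>2 + 4 * c1)"
  have "s * s = c2 * c2 + 4 * c1" using power2_csqrt[of "c2\<^sup>2 + 4 * c1"]
    unfolding s_def by (simp add: power2_eq_square)
  then have "((c2 + s) / 2) * ((c2 + s) / 2) = c2 * ((c2 + s) / 2) + c1" by (simp add: field_simps)
  then show ?thesis by blast
qed

lemma eigenvector_in_invariant_plane: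
  assumes A: "clinear A" and n1: "A y \<notin> C.span {y}" and n2: "A (A y) \<in> C.span {y, A y}"
  obtains a \<kappa> v where "A y = a *\<^sub>C y + 1 *\<^sub>C v" "A v = \<kappa> *\<^sub>C v" "v \<noteq> 0" "y \<notin> C.span {v}"
proof -
  obtain c1 c2 where AAy: "A (A y) = c1 *\<^sub>C y + c2 *\<^sub>C A y" using n2 mem_C_span_pair by blast
  obtain \<kappa> where \<kappa>: "\<kappa> * \<kappa> = c2 * \<kappa> + c1" using complex_quadratic_root by blast
  define v where "v = A y - (c2 - \<kappa>) *\<^sub>C y"
  have Ay: "A y = (c2 - \<kappa>) *\<^sub>C y + 1 *\<^sub>C v" by (simp add: v_def)
  have "A v = c1 *\<^sub>C y + \<kappa> *\<^sub>C A y"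
    by (simp add: v_def module_hom.diff[OF A] module_hom.scale[OF A] AAy C.scale_left_diff_distrib)
  also have "c1 = - (\<kappa> * (c2 - \<kappa>))" using \<kappa> by (simp add: algebra_simps)
  finally have Av: "A v = \<kappa> *\<^sub>C v" by (simp add: v_def C.scale_right_diff_distrib algebra_simps)
  have "v \<noteq> 0"
  proof
    assume "v = 0"
    then have "A y = (c2 - \<kappa>) *\<^sub>C y" using Ay by simp
    then have "A y \<in> C.span {y}" using C.span_scale[OF C.span_base[of y "{y}"]] by simp
    then show False using n1 by blast
  qed
  moreover have "y \<notin> C.span {v}"
  proof
    assume "y \<in> C.span {v}"
    moreover have "y \<noteq> 0" using n1 module_hom.zero[OF A] C.span_zero by metis
    ultimately have "v \<in> C.span {y}" using C.in_span_insert[of y v "{}"] by simp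
    then have "(c2 - \<kappa>) *\<^sub>C y + 1 *\<^sub>C v \<in> C.span {y}"
      by (intro C.span_add C.span_scale) (auto intro: C.span_base)
    then show False using n1 unfolding Ay[symmetric] by blast
  qed
  ultimately show ?thesis by (rule that[OF Ay Av])
qed

locale rank_one_cores_agree =
  fixes A B :: "'a::complex_banach \<Rightarrow> 'a"
  assumes clinear_A: "clinear A" and clinear_B: "clinear B"
    and analytic_cores_eq: "bounded_cfunctional f \<Longrightarrow>
      analytic_core (rank_one_jordan A f y) = analytic_core (rank_one_jordan B f y)"
begin

lemma swap: "rank_one_cores_agree B A"
  unfolding rank_one_cores_agree_def using clinear_A clinear_B analytic_cores_eq by simp

lemma image_mem_span: "B y \<in> C.span {y, A y}"
proof (rule ccontr)
  assume By: "B y \<notin> C.span {y, A y}"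
  then obtain f where f: "bounded_cfunctional f" "f (B y) = 1" "f y = 0" "f (A y) = 0"
    using exists_bounded_cfunctional_separating[of "{y, A y}" "B y"] by auto
  have "y \<noteq> 0" using By module_hom.zero[OF clinear_B] C.span_zero by metis
  have "analytic_core (rank_one_jordan A f y) \<subseteq> {0}"
    using clinear_A f(1) by (rule analytic_core_rank_one_jordan_trivial) (simp_all add: f)
  moreover have "y \<in> analytic_core (rank_one_jordan B f y)"
    using clinear_rank_one_jordan[OF clinear_B f(1)]
    by (rule eigenvector_mem_analytic_core[where \<mu> = 1]) (simp_all add: rank_one_jordan_def f)
  ultimately show False using analytic_cores_eq[OF f(1)] \<open>y \<noteq> 0\<close> by auto
qed

lemma image_eq_combination:
  obtains \<alpha> \<beta> where "B y = \<alpha> *\<^sub>C y + \<beta> *\<^sub>C A y"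
  using image_mem_span mem_C_span_pair by blast

lemma plane_coefficient_eq_0:
  assumes f: "bounded_cfunctional f" and "f y = 1" "f v = 0" "f (B v) = 0"
    and By: "B y = a *\<^sub>C y + c *\<^sub>C v"
    and trivial: "analytic_core (rank_one_jordan A f y) \<subseteq> {0}"
  shows "a = 0"
proof (rule ccontr)
  assume "a \<noteq> 0"
  let ?u = "(2 * a) *\<^sub>C y + c *\<^sub>C v"
  have "?u \<in> analytic_core (rank_one_jordan B f y)"
    using clinear_rank_one_jordan[OF clinear_B f] rank_one_jordan_plane(1)[OF clinear_B assms(1-5)]
    by (rule eigenvector_mem_analytic_core) (use \<open>a \<noteq> 0\<close> in simp)
  then have "?u = 0" using trivial analytic_cores_eq[OF f] by blast
  then have "f ?u = 0" by (simp add: bounded_cfunctional_simps[OF f])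
  moreover have "f ?u = 2 * a" using assms(2,3) by (simp add: bounded_cfunctional_simps[OF f])
  ultimately show False using \<open>a \<noteq> 0\<close> by simp
qed

lemma proportional_at_eigenvector:
  assumes "A y \<in> C.span {y}"
  shows "\<exists>l. B y = l *\<^sub>C A y"
proof -
  obtain k where Ay: "A y = k *\<^sub>C y" using assms by (auto simp: C.span_singleton)
  obtain \<alpha> \<beta> where By: "B y = \<alpha> *\<^sub>C y + \<beta> *\<^sub>C A y" by (rule image_eq_combination)
  consider "k \<noteq> 0" | "y = 0" | "k = 0" "y \<noteq> 0" by blast
  then show ?thesis
  proof cases
    case 1
    then have "B y = ((\<alpha> + \<beta> * k) / k) *\<^sub>C A y" using By Ay by (simp add: scaleC_add_left)
    then show ?thesis by blast
  next
    case 2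
    then show ?thesis using module_hom.zero[OF clinear_B] by (metis C.scale_zero_left)
  next
    case 3
    obtain f where f: "bounded_cfunctional f" "f y = 1" using exists_bounded_cfunctional_eq_1 \<open>y \<noteq> 0\<close> by blast
    have "analytic_core (rank_one_jordan A f y) \<subseteq> {0}"
      using clinear_A f(1) by (rule analytic_core_rank_one_jordan_trivial)
        (simp_all add: Ay 3 module_hom.zero[OF clinear_A] bounded_cfunctional_simps[OF f(1)])
    then have "\<alpha> = 0"
      using f By Ay 3 by (intro plane_coefficient_eq_0[of f y 0 \<alpha> 0])
        (simp_all add: module_hom.zero[OF clinear_B] bounded_cfunctional_simps[OF f(1)])
    then show ?thesis using By by (intro exI[of _ \<beta>]) simp
  qed
qed

lemma proportional_on_invariant_plane:
  assumes n1: "A y \<notin> C.span {y}" and n2: "A (A y) \<in> C.span {y, A y}"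
  shows "\<exists>l. B y = l *\<^sub>C A y"
proof -
  obtain a \<kappa> v where Ay: "A y = a *\<^sub>C y + 1 *\<^sub>C v" and Av: "A v = \<kappa> *\<^sub>C v"
    and "v \<noteq> 0" and yv: "y \<notin> C.span {v}"
    by (rule eigenvector_in_invariant_plane[OF clinear_A n1 n2])
  obtain f where f: "bounded_cfunctional f" "f y = 1" "f v = 0"
    using exists_bounded_cfunctional_separating[OF finite.insertI[OF finite.emptyI] yv] by auto
  have fAv: "f (A v) = 0" using Av f by (simp add: bounded_cfunctional_simps[OF f(1)])
  obtain \<alpha>' \<beta>' where "B v = \<alpha>' *\<^sub>C v + \<beta>' *\<^sub>C A v" by (rule image_eq_combination)
  then have fBv: "f (B v) = 0" using Av f by (simp add: bounded_cfunctional_simps[OF f(1)])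
  obtain \<alpha> \<beta> where "B y = \<alpha> *\<^sub>C y + \<beta> *\<^sub>C A y" by (rule image_eq_combination)
  moreover define b where "b = \<alpha> + \<beta> * a"
  ultimately have By: "B y = b *\<^sub>C y + \<beta> *\<^sub>C v"
    by (simp add: Ay scaleC_add_right scaleC_add_left algebra_simps)
  show ?thesis
  proof (cases "a = 0")
    case True
    have "analytic_core (rank_one_jordan A f y) \<subseteq> {0}"
      using clinear_A f(1) by (rule analytic_core_rank_one_jordan_trivial)
        (use Ay True fAv f in \<open>simp_all add: bounded_cfunctional_simps[OF f(1)]\<close>)
    then have "b = 0" by (rule plane_coefficient_eq_0[OF f fBv By])
    then have "B y = \<beta> *\<^sub>C A y" using By Ay True by simp
    then show ?thesis by blast
  next
    case False
    have "(2 * a) *\<^sub>C y + 1 *\<^sub>C v \<in> analytic_core (rank_one_jordan A f y)"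
      using clinear_rank_one_jordan[OF clinear_A f(1)] rank_one_jordan_plane(1)[OF clinear_A f fAv Ay]
      by (rule eigenvector_mem_analytic_core) (use False in simp)
    then have "(2 * a) *\<^sub>C y + 1 *\<^sub>C v \<in> range (\<lambda>p. p *\<^sub>C ((2 * b) *\<^sub>C y + \<beta> *\<^sub>C v))"
      using analytic_cores_eq[OF f(1)] analytic_core_rank_one_jordan_plane[OF clinear_B f fBv By] by blast
    then obtain r where "(2 * a) *\<^sub>C y + 1 *\<^sub>C v = (r * (2 * b)) *\<^sub>C y + (r * \<beta>) *\<^sub>C v"
      by (auto simp: scaleC_add_right)
    from scaleC_pair_cancel[OF f \<open>v \<noteq> 0\<close> this] have "a = r * b" "1 = r * \<beta>"
      by (metis mult.left_commute mult_cancel_left zero_neq_numeral)+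
    then have "A y = r *\<^sub>C B y" by (simp add: Ay By scaleC_add_right)
    then have "B y = (1 / r) *\<^sub>C A y" using \<open>1 = r * \<beta>\<close> by auto
    then show ?thesis by blast
  qed
qed

lemma proportional_at_cyclic_triple:
  assumes n1: "A y \<notin> C.span {y}" and n2: "A (A y) \<notin> C.span {y, A y}"
  shows "\<exists>l. B y = l *\<^sub>C A y"
proof -
  have "y \<noteq> 0" using n1 module_hom.zero[OF clinear_A] C.span_zero by metis
  have "y \<notin> C.span {A y, A (A y)}"
  proof
    assume y: "y \<in> C.span {A y, A (A y)}"
    show False
    proof (cases "y \<in> C.span {A y}")
      case True
      then have "A y \<in> C.span {y}" using \<open>y \<noteq> 0\<close> C.in_span_insert[of y "A y" "{}"] by simp
      then show False using n1 by blast
    next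
      case False
      then have "A (A y) \<in> C.span {y, A y}"
        using y C.in_span_insert[of y "A (A y)" "{A y}"] by (simp add: insert_commute)
      then show False using n2 by blast
    qed
  qed
  then obtain f where f: "bounded_cfunctional f" "f y = 1" "f (A y) = 0" "f (A (A y)) = 0"
    using exists_bounded_cfunctional_separating[of "{A y, A (A y)}" y] by auto
  obtain \<alpha> \<beta> where By: "B y = \<alpha> *\<^sub>C y + \<beta> *\<^sub>C A y" by (rule image_eq_combination)
  obtain \<alpha>' \<beta>' where "B (A y) = \<alpha>' *\<^sub>C A y + \<beta>' *\<^sub>C A (A y)"
    using image_eq_combination[of "A y"] by blast
  then have "f (B (A y)) = 0" using f by (simp add: bounded_cfunctional_simps[OF f(1)])
  moreover have "analytic_core (rank_one_jordan A f y) \<subseteq> {0}"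
    using clinear_A f(1) by (rule analytic_core_rank_one_jordan_trivial) (simp_all add: f)
  ultimately have "\<alpha> = 0" using f By by (intro plane_coefficient_eq_0[of f y "A y" \<alpha> \<beta>])
  then show ?thesis using By by auto
qed

lemma locally_proportional: "\<exists>l. B y = l *\<^sub>C A y"
  using proportional_at_eigenvector proportional_on_invariant_plane proportional_at_cyclic_triple
  by blast

lemma proportional: "\<exists>l. \<forall>x. B x = l *\<^sub>C A x"
  using vector_space_pair.proportional_if_locally_proportional[OF vector_space_pair_scaleC]
    clinear_A clinear_B locally_proportional by blast

lemma nonzero_multiple: "\<exists>c. c \<noteq> 0 \<and> B = (\<lambda>x. c *\<^sub>C A x)"
proof -
  obtain l where l: "\<And>x. B x = l *\<^sub>C A x" using proportional by blast
  obtain l' where l': "\<And>x. A x = l' *\<^sub>C B x" using rank_one_cores_agree.proportional[OF swap] by blast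
  show ?thesis
  proof (cases "l = 0")
    case True
    then show ?thesis using l l' by (intro exI[of _ 1]) (simp add: fun_eq_iff)
  qed (use l in \<open>auto simp: fun_eq_iff\<close>)
qed

end

lemma rank_one_cores_agreeI:
  assumes A: "clinear A" and B: "clinear B"
    and eq: "\<forall>F\<in>rank_le_one_ops.
      analytic_core (\<lambda>x. A (F x) + F (A x)) = analytic_core (\<lambda>x. B (F x) + F (B x))"
  shows "rank_one_cores_agree A B"
proof (unfold rank_one_cores_agree_def, intro conjI allI impI A B)
  fix f :: "'a \<Rightarrow> complex" and y :: 'a assume "bounded_cfunctional f"
  then have "(\<lambda>z. f z *\<^sub>C y) \<in> rank_le_one_ops" unfolding rank_le_one_ops_def by blast
  from eq[rule_format, OF this]
  show "analytic_core (rank_one_jordan A f y) = analytic_core (rank_one_jordan B f y)"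
    by (simp add: rank_one_jordan_eq[OF A, symmetric] rank_one_jordan_eq[OF B, symmetric])
qed

lemma analytic_core_jordan_product_scaleC:
  assumes A: "clinear A" and T: "clinear T" and "c \<noteq> 0"
  shows "analytic_core (\<lambda>x. A (T x) + T (A x)) = analytic_core (\<lambda>x. c *\<^sub>C A (T x) + T (c *\<^sub>C A x))"
  using analytic_core_scaleC[OF clinear_jordan_product[OF A T] \<open>c \<noteq> 0\<close>]
  by (simp add: module_hom.scale[OF T] scaleC_add_right)

theorem lemma2p4:
  fixes A B :: "'a::complex_banach \<Rightarrow> 'a"
  assumes "infinite_dimensional_C TYPE('a)"
    and "bounded_clinear_op A" and "bounded_clinear_op B"
  shows "((\<forall>T. bounded_clinear_op T \<longrightarrow>
             analytic_core (\<lambda>x. A (T x) + T (A x)) = analytic_core (\<lambda>x. B (T x) + T (B x)))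
          \<longleftrightarrow> (\<forall>F\<in>rank_le_one_ops.
             analytic_core (\<lambda>x. A (F x) + F (A x)) = analytic_core (\<lambda>x. B (F x) + F (B x))))
       \<and> ((\<forall>F\<in>rank_le_one_ops.
             analytic_core (\<lambda>x. A (F x) + F (A x)) = analytic_core (\<lambda>x. B (F x) + F (B x)))
          \<longleftrightarrow> (\<exists>c::complex. c \<noteq> 0 \<and> B = (\<lambda>x. c *\<^sub>C A x)))"
    (is "(?i \<longleftrightarrow> ?ii) \<and> (?ii \<longleftrightarrow> ?iii)")
proof -
  have A: "clinear A" and B: "clinear B"
    using assms(2,3) by (simp_all add: clinear_if_bounded_clinear_op)
  have "?i \<Longrightarrow> ?ii" using bounded_clinear_op_if_rank_le_one by blast
  moreover have "?ii \<Longrightarrow> ?iii"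
  proof -
    assume ?ii
    then interpret rank_one_cores_agree A B by (rule rank_one_cores_agreeI[OF A B])
    show ?iii by (rule nonzero_multiple)
  qed
  moreover have "?iii \<Longrightarrow> ?i"
  proof (intro allI impI)
    fix T :: "'a \<Rightarrow> 'a" assume ?iii and T: "bounded_clinear_op T"
    then obtain c where "c \<noteq> 0" "B = (\<lambda>x. c *\<^sub>C A x)" by blast
    then show "analytic_core (\<lambda>x. A (T x) + T (A x)) = analytic_core (\<lambda>x. B (T x) + T (B x))"
      using analytic_core_jordan_product_scaleC[OF A clinear_if_bounded_clinear_op[OF T]] by simp
  qed
  ultimately show ?thesis by blast
qed

end
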